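(* Let $m=n^\beta$ with $\beta\in(0,1)$ and $\epsilon=\epsilon(n)\to0$ with $\frac{\sqrt{-\log\epsilon}+\sqrt{\log m}}{\sqrt m\,\epsilon^{d}}\to0$. Then for $n$ sufficiently large, with probability $1-\mathcal O(m^{-2})$, $C_1\epsilon^d/2\le\widehat d_{\mathrm{ref},\epsilon,n}(x)\le2C_2\epsilon^d$ for all $x\in M$, and with probability $1-\mathcal O(n^{-2})$, $C_1\epsilon^d/2\le d_{\mathrm{ref},\epsilon,n}(x)\le2C_2\epsilon^d$ for all $x\in M$.
   Context: $M$ is a $d$-dimensional compact smooth Riemannian manifold without boundary isometrically embedded in $\mathbb R^D$, $dV$ its volume measure. $x_1,\dots,x_n$ i.i.d. with density $p_X$ and $y_1,\dots,y_m$ i.i.d. with density $p_Y$, independent; $p_X,p_Y\in C^4(M)$ bounded below by positive constants. Kernel $K_\epsilon(x,y)=e^{-\|x-y\|^2/\epsilon}$. $K_{\mathrm{ref},\epsilon}(x,y)=\int_MK_\epsilon(x,z)K_\epsilon(z,y)p_Y(z)dV(z)$, $d_{\mathrm{ref},\epsilon}(x)=\int_MK_{\mathrm{ref},\epsilon}(x,y)p_X(y)dV(y)$, $d_{\mathrm{ref},\epsilon,n}(x)=\frac1n\sum_iK_{\mathrm{ref},\epsilon}(x,x_i)$, $\widehat d_{\mathrm{ref},\epsilon,n}(x)=\frac1n\sum_i\frac1m\sum_kK_\epsilon(x,y_k)K_\epsilon(y_k,x_i)$. $C_1,C_2>0$ are constants (depending on the kernel, the curvature of $M$, and the minima resp.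 maxima of $p_X,p_Y$) such that $C_1\epsilon^d\le d_{\mathrm{ref},\epsilon}(x)\le C_2\epsilon^d$ for all $x\in M$. *)

theory Defs
  imports "HOL-Probability.Probability"
begin

fun Ck_real :: "nat \<Rightarrow> 'a::euclidean_space set \<Rightarrow> ('a \<Rightarrow> real) \<Rightarrow> bool" where
  "Ck_real 0 S g = continuous_on S g"
| "Ck_real (Suc k) S g =
     (continuous_on S g \<and> (\<forall>x\<in>S. g differentiable (at x)) \<and>
      (\<forall>i\<in>Basis. Ck_real k S (\<lambda>x. frechet_derivative g (at x) i)))"

definition Ck_on :: "nat \<Rightarrow> 'a::euclidean_space set \<Rightarrow> ('a \<Rightarrow> 'b::euclidean_space) \<Rightarrow> bool" where
  "Ck_on k S f = (\<forall>b\<in>Basis. Ck_real k S (\<lambda>x. f x \<bullet> b))"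

definition smooth_map_on :: "'a::euclidean_space set \<Rightarrow> ('a \<Rightarrow> 'b::euclidean_space) \<Rightarrow> bool" where
  "smooth_map_on S f = (\<forall>k. Ck_on k S f)"

definition is_chart :: "'b::euclidean_space itself \<Rightarrow> 'a::euclidean_space set \<Rightarrow> 'a set \<Rightarrow> 'b set \<Rightarrow> ('b \<Rightarrow> 'a) \<Rightarrow> bool" where
  "is_chart _ M U V \<phi> \<longleftrightarrow>
     open U \<and> open V \<and> smooth_map_on V \<phi> \<and> inj_on \<phi> V \<and> \<phi> ` V = M \<inter> U \<and>
     continuous_on (M \<inter> U) (inv_into V \<phi>) \<and>
     (\<forall>x\<in>V. \<phi> differentiable (at x) \<and> inj (frechet_derivative \<phi> (at x)))"

text \<open>M is a compact smooth embedded submanifold without boundary of dimension DIM('b).\<close>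
definition compact_embedded_submanifold :: "'b::euclidean_space itself \<Rightarrow> 'a::euclidean_space set \<Rightarrow> bool" where
  "compact_embedded_submanifold T M \<longleftrightarrow>
     compact M \<and> (\<forall>p\<in>M. \<exists>U V \<phi>. p \<in> U \<and> is_chart T M U V \<phi>)"

definition Ck_on_manifold :: "'b::euclidean_space itself \<Rightarrow> nat \<Rightarrow> 'a::euclidean_space set \<Rightarrow> ('a \<Rightarrow> real) \<Rightarrow> bool" where
  "Ck_on_manifold T k M f \<longleftrightarrow>
     (\<forall>U V \<phi>. is_chart T M U V \<phi> \<longrightarrow> Ck_real k V (f \<circ> \<phi>))"

definition hausdorff_pre :: "nat \<Rightarrow> real \<Rightarrow> 'a::metric_space set \<Rightarrow> ennreal" where
  "hausdorff_pre d \<delta> A =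
     (INF C \<in> {C :: nat \<Rightarrow> 'a set. A \<subseteq> (\<Union>i. C i) \<and> (\<forall>i. bounded (C i) \<and> diameter (C i) \<le> \<delta>)}.
        (\<Sum>i. if C i = {} then 0 else ennreal (unit_ball_vol (real d) * (diameter (C i) / 2) ^ d)))"

definition hausdorff_measure :: "nat \<Rightarrow> 'a::metric_space set \<Rightarrow> ennreal" where
  "hausdorff_measure d A = (SUP \<delta> \<in> {0<..}. hausdorff_pre d \<delta> A)"

text \<open>Volume measure dV of a d-dimensional submanifold M (with the induced metric):
  d-dimensional Hausdorff measure on the Borel subsets of M.\<close>
definition vol_measure :: "nat \<Rightarrow> 'a::euclidean_space set \<Rightarrow> 'a measure" where
  "vol_measure d M = measure_of M (sets (restrict_space borel M)) (hausdorff_measure d)"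

definition Kern :: "real \<Rightarrow> 'a::euclidean_space \<Rightarrow> 'a \<Rightarrow> real" where
  "Kern \<epsilon> x y = exp (- (norm (x - y))\<^sup>2 / \<epsilon>)"

definition Kref :: "'a::euclidean_space measure \<Rightarrow> ('a \<Rightarrow> real) \<Rightarrow> real \<Rightarrow> 'a \<Rightarrow> 'a \<Rightarrow> real" where
  "Kref dV pY \<epsilon> x y = (\<integral>z. Kern \<epsilon> x z * Kern \<epsilon> z y * pY z \<partial>dV)"

definition dref :: "'a::euclidean_space measure \<Rightarrow> ('a \<Rightarrow> real) \<Rightarrow> ('a \<Rightarrow> real) \<Rightarrow> real \<Rightarrow> 'a \<Rightarrow> real" where
  "dref dV pX pY \<epsilon> x = (\<integral>y. Kref dV pY \<epsilon> x y * pX y \<partial>dV)"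

definition dref_n :: "'a::euclidean_space measure \<Rightarrow> ('a \<Rightarrow> real) \<Rightarrow> real \<Rightarrow> nat \<Rightarrow> (nat \<Rightarrow> 'a) \<Rightarrow> 'a \<Rightarrow> real" where
  "dref_n dV pY \<epsilon> n xs x = (1 / real n) * (\<Sum>i<n. Kref dV pY \<epsilon> x (xs i))"

definition dref_hat :: "real \<Rightarrow> nat \<Rightarrow> nat \<Rightarrow> (nat \<Rightarrow> 'a::euclidean_space) \<Rightarrow> (nat \<Rightarrow> 'a) \<Rightarrow> 'a \<Rightarrow> real" where
  "dref_hat \<epsilon> n m xs ys x =
     (1 / real n) * (\<Sum>i<n. (1 / real m) * (\<Sum>k<m. Kern \<epsilon> x (ys k) * Kern \<epsilon> (ys k) (xs i)))"

end

theory Submission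
  imports Defs "HOL-Real_Asymp.Real_Asymp"
begin

text \<open>
  Both degree functions are averages of quantities in \<open>[0, 1]\<close>: \<open>dref_n\<close> averages
  \<open>Kref x x\<^sub>i\<close> over the x-samples, and \<open>dref_hat\<close> averages \<open>Kern x y\<^sub>k * Kern y\<^sub>k x\<^sub>i\<close> over
  the y-samples, which for fixed \<open>x\<^sub>i\<close> estimates \<open>Kref x x\<^sub>i\<close>.  When \<open>M\<close> lies in the ball of
  radius \<open>R\<close>, all of them are \<open>4R/\<epsilon>\<close>-Lipschitz in the points.  Hoeffding's inequality with
  deviation \<open>C1 \<epsilon>^d / 8\<close> and a union bound over an \<open>r\<close>-net of \<open>M\<close> with \<open>r \<sim> \<epsilon>^(d+1)\<close>
  show that, outside an event of probability at most \<open>(net size)\<^sup>2 \<cdot> 2 exp (-N C1\<^sup>2 \<epsilon>^(2d) / 32)\<close>,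
  every average is within \<open>C1 \<epsilon>^d / 4\<close> of its mean uniformly in \<open>x\<close>; together with
  \<open>C1 \<epsilon>^d \<le> dref \<le> C2 \<epsilon>^d\<close> this keeps both degree functions in \<open>[C1 \<epsilon>^d / 2, 2 C2 \<epsilon>^d]\<close>.
  The rate assumption makes \<open>-ln \<epsilon>\<close> and \<open>ln m\<close>, hence the logarithm of the net size, negligible
  against \<open>m \<epsilon>^(2d)\<close>, so the exceptional probabilities are at most \<open>1/m\<^sup>2\<close> (with \<open>N = m\<close>)
  and \<open>1/n\<^sup>2\<close> (with \<open>N = n\<close>).
\<close>

lemma space_vol_measure: "space (vol_measure d M) = M"
  using sets.space_closed[of "restrict_space borel M"]
  by (simp add: vol_measure_def space_measure_of space_restrict_space)

lemma sets_vol_measure: "sets (vol_measure d M) = sets (restrict_space borel M)"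
  using sets.space_closed[of "restrict_space borel M"]
    sigma_algebra.sigma_sets_eq[OF sets.sigma_algebra_axioms[of "restrict_space borel M"]]
  by (simp add: vol_measure_def sets_measure_of space_restrict_space)

section \<open>Concentration of sample means\<close>

lemma (in prob_space) prob_mean_deviation_ge:
  fixes Z :: "nat \<Rightarrow> 'a \<Rightarrow> 'x" and N :: "'x measure"
  assumes n: "n > 0" and ind: "indep_vars (\<lambda>_. N) Z {..<n}"
    and dist: "\<And>i. distributed M N (Z i) (\<lambda>x. ennreal (p x))"
    and p_nonneg: "\<And>x. x \<in> space N \<Longrightarrow> 0 \<le> p x"
    and F: "F \<in> borel_measurable N" "\<And>y. y \<in> space N \<Longrightarrow> 0 \<le> F y \<and> F y \<le> 1"
    and \<delta>: "\<delta> \<ge> 0"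
  shows "prob {\<omega>\<in>space M. \<delta> \<le> \<bar>(\<Sum>i<n. F (Z i \<omega>)) / n - (\<integral>y. p y * F y \<partial>N)\<bar>}
           \<le> 2 * exp (-2 * real n * \<delta>\<^sup>2)"
proof -
  let ?\<mu> = "\<integral>y. p y * F y \<partial>N"
  have Z: "Z i \<in> measurable M N" for i
    using dist by (simp add: distributed_def)
  have E: "expectation (\<lambda>\<omega>. F (Z i \<omega>)) = ?\<mu>" for i
    using distributed_integral[OF dist F(1) p_nonneg] by simp
  interpret H: Hoeffding_ineq M "{..<n}" "\<lambda>i \<omega>. F (Z i \<omega>)" "\<lambda>_. 0" "\<lambda>_. 1" "n * ?\<mu>"
  proof unfold_locales
    show "indep_vars (\<lambda>_. borel) (\<lambda>i \<omega>. F (Z i \<omega>)) {..<n}"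
      by (rule indep_vars_compose2[OF ind]) (use F in auto)
    show "AE \<omega> in M. F (Z i \<omega>) \<in> {0..1}" for i
      using F(2) measurable_space[OF Z] by (intro AE_I2) auto
  qed (simp_all add: E)
  have "a / n - ?\<mu> = (a - n * ?\<mu>) / n" for a
    using n by (simp add: field_simps)
  then have "\<bar>a / n - ?\<mu>\<bar> = \<bar>a - n * ?\<mu>\<bar> / n" for a
    by (simp add: abs_divide)
  then have "{\<omega>\<in>space M. \<delta> \<le> \<bar>(\<Sum>i<n. F (Z i \<omega>)) / n - ?\<mu>\<bar>}
      = {\<omega>\<in>space M. n * \<delta> \<le> \<bar>(\<Sum>i<n. F (Z i \<omega>)) - n * ?\<mu>\<bar>}"
    using n by (simp add: le_divide_eq mult.commute)
  also have "prob \<dots> \<le> 2 * exp (-2 * (n * \<delta>)\<^sup>2 / (\<Sum>i<n. (1 - 0)\<^sup>2))"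
    by (rule H.Hoeffding_ineq_abs_ge) (use n \<delta> in auto)
  also have "\<dots> = 2 * exp (-2 * real n * \<delta>\<^sup>2)"
    using n by (simp add: power2_eq_square)
  finally show ?thesis .
qed

lemma (in prob_space) prob_mean_deviation_finite_family:
  fixes Z :: "nat \<Rightarrow> 'a \<Rightarrow> 'x" and N :: "'x measure" and F :: "'t \<Rightarrow> 'x \<Rightarrow> real"
  assumes n: "n > 0" and ind: "indep_vars (\<lambda>_. N) Z {..<n}"
    and dist: "\<And>i. distributed M N (Z i) (\<lambda>x. ennreal (p x))"
    and p_nonneg: "\<And>x. x \<in> space N \<Longrightarrow> 0 \<le> p x"
    and S: "finite S"
    and F: "\<And>t. t \<in> S \<Longrightarrow> F t \<in> borel_measurable N"
      "\<And>t y. t \<in> S \<Longrightarrow> y \<in> space N \<Longrightarrow> 0 \<le> F t y \<and> F t y \<le> 1"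
    and \<delta>: "\<delta> \<ge> 0"
  shows "{\<omega>\<in>space M. \<exists>t\<in>S. \<delta> \<le> \<bar>(\<Sum>i<n. F t (Z i \<omega>)) / n - (\<integral>y. p y * F t y \<partial>N)\<bar>} \<in> events"
    and "prob {\<omega>\<in>space M. \<exists>t\<in>S. \<delta> \<le> \<bar>(\<Sum>i<n. F t (Z i \<omega>)) / n - (\<integral>y. p y * F t y \<partial>N)\<bar>}
           \<le> card S * (2 * exp (-2 * real n * \<delta>\<^sup>2))"
proof -
  define B where "B t = {\<omega>\<in>space M. \<delta> \<le> \<bar>(\<Sum>i<n. F t (Z i \<omega>)) / n - (\<integral>y. p y * F t y \<partial>N)\<bar>}" for t
  have [measurable]: "Z i \<in> measurable M N" for i
    using dist by (simp add: distributed_def)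
  have B: "B t \<in> events" if "t \<in> S" for t
  proof -
    have [measurable]: "F t \<in> borel_measurable N" using F(1)[OF that] .
    show ?thesis unfolding B_def by measurable
  qed
  have eq: "{\<omega>\<in>space M. \<exists>t\<in>S. \<delta> \<le> \<bar>(\<Sum>i<n. F t (Z i \<omega>)) / n - (\<integral>y. p y * F t y \<partial>N)\<bar>} = (\<Union>t\<in>S. B t)"
    by (auto simp: B_def)
  show "{\<omega>\<in>space M. \<exists>t\<in>S. \<delta> \<le> \<bar>(\<Sum>i<n. F t (Z i \<omega>)) / n - (\<integral>y. p y * F t y \<partial>N)\<bar>} \<in> events"
    unfolding eq using B S by auto
  have "prob (\<Union>t\<in>S. B t) \<le> (\<Sum>t\<in>S. prob (B t))"
    by (rule measure_UNION_le[OF S B])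
  also have "\<dots> \<le> (\<Sum>t\<in>S. 2 * exp (-2 * real n * \<delta>\<^sup>2))"
  proof (rule sum_mono)
    fix t assume "t \<in> S"
    show "prob (B t) \<le> 2 * exp (-2 * real n * \<delta>\<^sup>2)"
      unfolding B_def using F \<open>t \<in> S\<close>
      by (intro prob_mean_deviation_ge[OF n ind dist p_nonneg _ _ \<delta>]) auto
  qed
  finally show "prob {\<omega>\<in>space M. \<exists>t\<in>S. \<delta> \<le> \<bar>(\<Sum>i<n. F t (Z i \<omega>)) / n - (\<integral>y. p y * F t y \<partial>N)\<bar>}
      \<le> card S * (2 * exp (-2 * real n * \<delta>\<^sup>2))"
    unfolding eq by simp
qed

lemma (in prob_space) prob_ge_of_compl_subset:
  assumes "A \<in> events" "B \<in> events" "space M - B \<subseteq> A" "prob B \<le> c"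
  shows "1 - c \<le> prob A"
  using finite_measure_mono[OF assms(3,1)] prob_compl[OF assms(2)] assms(4) by linarith

lemma (in prob_space) indep_sets_reindex:
  assumes inj: "inj_on f I" and ind: "indep_sets F (f ` I)"
  shows "indep_sets (\<lambda>i. F (f i)) I"
proof (rule indep_setsI)
  show "F (f i) \<subseteq> events" if "i \<in> I" for i
    using ind that unfolding indep_sets_def by auto
next
  fix A J assume J: "J \<noteq> {}" "J \<subseteq> I" "finite J" and A: "\<forall>j\<in>J. A j \<in> F (f j)"
  define B where "B k = A (inv_into I f k)" for k
  have Bf: "B (f j) = A j" if "j \<in> J" for j
    using that J inj by (auto simp: B_def inv_into_f_f)
  have inj_J: "inj_on f J"
    using inj J inj_on_subset by blast
  have "prob (\<Inter>k\<in>f ` J. B k) = (\<Prod>k\<in>f ` J. prob (B k))"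
    by (rule indep_setsD[OF ind]) (use J A Bf in auto)
  moreover have "(\<Inter>k\<in>f ` J. B k) = (\<Inter>j\<in>J. A j)"
    using Bf by auto
  moreover have "(\<Prod>k\<in>f ` J. prob (B k)) = (\<Prod>j\<in>J. prob (A j))"
    using prod.reindex[OF inj_J, of "\<lambda>k. prob (B k)"] Bf by simp
  ultimately show "prob (\<Inter>j\<in>J. A j) = (\<Prod>j\<in>J. prob (A j))" by simp
qed

lemma (in prob_space) indep_vars_reindex:
  assumes "inj_on f I" and "indep_vars N X (f ` I)"
  shows "indep_vars (\<lambda>i. N (f i)) (\<lambda>i. X (f i)) I"
  using assms indep_sets_reindex[OF assms(1), of "\<lambda>i. {X i -` A \<inter> space M | A. A \<in> sets (N i)}"]
  unfolding indep_vars_def2 by auto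

lemma (in prob_space) indep_vars_case_sum:
  assumes "indep_vars (\<lambda>_. N) (\<lambda>j. case j of Inl i \<Rightarrow> X i | Inr k \<Rightarrow> Y k) UNIV"
  shows "indep_vars (\<lambda>_. N) X I" and "indep_vars (\<lambda>_. N) Y J"
proof -
  show "indep_vars (\<lambda>_. N) X I"
    using indep_vars_reindex[of Inl I, OF _ indep_vars_subset[OF assms]] by simp
  show "indep_vars (\<lambda>_. N) Y J"
    using indep_vars_reindex[of Inr J, OF _ indep_vars_subset[OF assms]] by simp
qed

section \<open>Finite nets of bounded sets\<close>

lemma norm_le_of_floor_coordinates_eq:
  fixes x y :: "'a::euclidean_space" and h :: real
  assumes h: "h > 0" and eq: "\<And>b. b \<in> Basis \<Longrightarrow> \<lfloor>(x \<bullet> b) / h\<rfloor> = \<lfloor>(y \<bullet> b) / h\<rfloor>"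
  shows "norm (x - y) \<le> DIM('a) * h"
proof -
  have "\<bar>(x - y) \<bullet> b\<bar> \<le> h" if "b \<in> Basis" for b
  proof -
    from eq[OF that] have "\<bar>(x \<bullet> b) / h - (y \<bullet> b) / h\<bar> < 1" by linarith
    then have "\<bar>((x - y) \<bullet> b) / h\<bar> < 1" by (simp add: inner_diff_left diff_divide_distrib)
    then show ?thesis using h by (simp add: abs_divide)
  qed
  then have "(\<Sum>b\<in>Basis. \<bar>(x - y) \<bullet> b\<bar>) \<le> DIM('a) * h"
    using sum_mono[of Basis "\<lambda>b. \<bar>(x - y) \<bullet> b\<bar>" "\<lambda>_. h"] by simp
  then show ?thesis
    using norm_le_l1[of "x - y"] by linarith
qed

lemma card_floor_coordinates_image_le:
  fixes M :: "'a::euclidean_space set" and R h :: real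
  assumes R: "0 \<le> R" "\<And>x. x \<in> M \<Longrightarrow> norm x \<le> R" and h: "0 < h"
  defines "q \<equiv> \<lambda>x. restrict (\<lambda>b. \<lfloor>(x \<bullet> b) / h\<rfloor>) Basis"
  shows "finite (q ` M)" and "card (q ` M) \<le> (2 * R / h + 3) ^ DIM('a)"
proof -
  define K where "K = \<lceil>R / h\<rceil>"
  have q_range: "q ` M \<subseteq> PiE Basis (\<lambda>_. {-K..K})"
  proof -
    have "\<lfloor>(x \<bullet> b) / h\<rfloor> \<in> {-K..K}" if "x \<in> M" "b \<in> Basis" for x b
    proof -
      have "\<bar>x \<bullet> b\<bar> \<le> R" using R(2)[OF that(1)] Basis_le_norm[OF that(2), of x] by linarith
      then have "-(R / h) \<le> (x \<bullet> b) / h" "(x \<bullet> b) / h \<le> R / h"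
        using h divide_right_mono[of "-R" "x \<bullet> b" h] divide_right_mono[of "x \<bullet> b" R h] by auto
      moreover have "R / h \<le> K" unfolding K_def by simp
      ultimately show ?thesis by (simp add: le_floor_iff floor_le_iff)
    qed
    then show ?thesis by (auto simp: q_def)
  qed
  have fin: "finite (PiE Basis (\<lambda>_::'a. {-K..K}))" by (intro finite_PiE) auto
  show "finite (q ` M)" using finite_subset[OF q_range fin] .
  have "card (q ` M) \<le> card (PiE Basis (\<lambda>_::'a. {-K..K}))" by (rule card_mono[OF fin q_range])
  also have "\<dots> = nat (2 * K + 1) ^ DIM('a)" by (simp add: card_PiE)
  finally have "real (card (q ` M)) \<le> real (nat (2 * K + 1)) ^ DIM('a)"
    by (metis of_nat_le_iff of_nat_power)
  also have "\<dots> \<le> (2 * R / h + 3) ^ DIM('a)"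
  proof (rule power_mono)
    have "0 \<le> K" using R h by (simp add: K_def order_less_le_trans[of "-1" 0])
    then have "real (nat (2 * K + 1)) = 2 * K + 1" by simp
    also have "\<dots> \<le> 2 * R / h + 3"
      using ceiling_correct[of "R / h"] unfolding K_def of_int_add of_int_mult by simp
    finally show "real (nat (2 * K + 1)) \<le> 2 * R / h + 3" .
  qed simp
  finally show "card (q ` M) \<le> (2 * R / h + 3) ^ DIM('a)" .
qed

lemma finite_net:
  fixes M :: "'a::euclidean_space set" and R r :: real
  assumes R: "0 \<le> R" "\<And>x. x \<in> M \<Longrightarrow> norm x \<le> R" and r: "0 < r" "r \<le> 1"
  shows "\<exists>S\<subseteq>M. finite S \<and> card S \<le> ((2 * R * DIM('a) + 3) / r) ^ DIM('a)
           \<and> (\<forall>x\<in>M. \<exists>s\<in>S. norm (x - s) \<le> r)"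
proof -
  define D where "D = DIM('a)"
  define h where "h = r / D"
  have D: "D \<ge> 1" and h: "h > 0"
    using r by (simp_all add: D_def h_def DIM_positive Suc_leI)
  define q where "q = (\<lambda>x::'a. restrict (\<lambda>b. \<lfloor>(x \<bullet> b) / h\<rfloor>) Basis)"
  note q_image = card_floor_coordinates_image_le[where M = M and R = R and h = h, OF R h, folded q_def]
  \<comment> \<open>one point of \<open>M\<close> in each nonempty cell of the grid of mesh \<open>h\<close>\<close>
  define S where "S = (\<lambda>v. SOME x. x \<in> M \<and> q x = v) ` q ` M"
  have rep: "(SOME y. y \<in> M \<and> q y = q x) \<in> M \<and> q (SOME y. y \<in> M \<and> q y = q x) = q x"
    if "x \<in> M" for x
    by (rule someI[of _ x]) (use that in auto)
  have "S \<subseteq> M" using rep by (auto simp: S_def)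
  moreover have "finite S" unfolding S_def using q_image(1) by simp
  moreover have "card S \<le> ((2 * R * D + 3) / r) ^ D"
  proof -
    have "card S \<le> card (q ` M)" unfolding S_def by (rule card_image_le[OF q_image(1)])
    then have "real (card S) \<le> (2 * R / h + 3) ^ D" using q_image(2) unfolding D_def by linarith
    also have "2 * R / h + 3 \<le> (2 * R * D + 3) / r"
      using r D R by (simp add: h_def field_simps)
    then have "(2 * R / h + 3) ^ D \<le> ((2 * R * D + 3) / r) ^ D"
      using R h by (intro power_mono) auto
    finally show ?thesis .
  qed
  moreover have "\<exists>s\<in>S. norm (x - s) \<le> r" if x: "x \<in> M" for x
  proof
    let ?s = "SOME y. y \<in> M \<and> q y = q x"
    show "?s \<in> S" using x by (auto simp: S_def)
    have "\<lfloor>(?s \<bullet> b) / h\<rfloor> = \<lfloor>(x \<bullet> b) / h\<rfloor>" if "b \<in> Basis" for b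
      using fun_cong[OF conjunct2[OF rep[OF x]], of b] that by (simp add: q_def)
    then have "norm (?s - x) \<le> D * h"
      unfolding D_def by (rule norm_le_of_floor_coordinates_eq[OF h])
    then show "norm (x - ?s) \<le> r" using D by (simp add: h_def norm_minus_commute)
  qed
  ultimately show ?thesis unfolding D_def by blast
qed

lemma card_product_le_power:
  fixes a :: real
  assumes card: "card S \<le> a ^ D" and a: "1 \<le> a"
  shows "card S \<le> a ^ (2 * D)" and "card (S \<times> S) \<le> a ^ (2 * D)"
proof -
  show "card S \<le> a ^ (2 * D)"
    using card power_increasing[of D "2 * D" a] a by simp
  have "real (card (S \<times> S)) = real (card S) * real (card S)" by (simp add: card_cartesian_product)
  also have "\<dots> \<le> a ^ D * a ^ D" using card a by (intro mult_mono) auto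
  finally show "card (S \<times> S) \<le> a ^ (2 * D)" by (simp add: mult_2 power_add)
qed

lemma countable_dense_subset_of_bounded:
  fixes M :: "'a::euclidean_space set"
  assumes "bounded M"
  obtains D where "countable D" "D \<subseteq> M" "\<And>x t. x \<in> M \<Longrightarrow> 0 < t \<Longrightarrow> \<exists>s\<in>D. norm (x - s) \<le> t"
proof -
  obtain R where R: "0 \<le> R" "\<And>x. x \<in> M \<Longrightarrow> norm x \<le> R"
    using assms by (meson bounded_pos less_imp_le)
  have "\<exists>S\<subseteq>M. finite S \<and> (\<forall>x\<in>M. \<exists>s\<in>S. norm (x - s) \<le> inverse (real (Suc k)))" for k
  proof -
    have "0 < inverse (real (Suc k))" "inverse (real (Suc k)) \<le> 1"
      by (simp_all add: inverse_le_1_iff)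
    from finite_net[where M = M, OF R this] obtain S where
      "S \<subseteq> M" "finite S" "\<forall>x\<in>M. \<exists>s\<in>S. norm (x - s) \<le> inverse (real (Suc k))"
      by auto
    then show ?thesis by blast
  qed
  then obtain S where S: "\<And>k. S k \<subseteq> M" "\<And>k. finite (S k)"
    "\<And>k x. x \<in> M \<Longrightarrow> \<exists>s\<in>S k. norm (x - s) \<le> inverse (real (Suc k))"
    by metis
  show ?thesis
  proof
    show "countable (\<Union>k. S k)" using S(2) by (simp add: countable_finite)
    show "(\<Union>k. S k) \<subseteq> M" using S(1) by blast
    fix x and t :: real assume x: "x \<in> M" and t: "0 < t"
    obtain k where k: "inverse (real (Suc k)) < t"
      using reals_Archimedean[OF t] by blast
    obtain s where "s \<in> S k" "norm (x - s) \<le> inverse (real (Suc k))"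
      using S(3)[OF x] by blast
    then show "\<exists>s\<in>\<Union>k. S k. norm (x - s) \<le> t"
      using k by (intro bexI[of _ s]) auto
  qed
qed

lemma sets_Collect_Lipschitz_bounds:
  fixes g :: "'w \<Rightarrow> 'a::euclidean_space \<Rightarrow> real"
  assumes "bounded M"
    and g_meas: "\<And>x. x \<in> M \<Longrightarrow> (\<lambda>\<omega>. g \<omega> x) \<in> borel_measurable P"
    and g_lip: "\<And>\<omega> x y. \<omega> \<in> space P \<Longrightarrow> x \<in> M \<Longrightarrow> y \<in> M \<Longrightarrow> \<bar>g \<omega> x - g \<omega> y\<bar> \<le> L * norm (x - y)"
  shows "{\<omega>\<in>space P. \<forall>x\<in>M. a \<le> g \<omega> x \<and> g \<omega> x \<le> b} \<in> sets P"
proof -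
  obtain D where D: "countable D" "D \<subseteq> M" "\<And>x t. x \<in> M \<Longrightarrow> 0 < t \<Longrightarrow> \<exists>s\<in>D. norm (x - s) \<le> t"
    using countable_dense_subset_of_bounded[OF assms(1)] by blast
  have approx: "\<exists>s\<in>D. \<bar>g \<omega> x - g \<omega> s\<bar> \<le> e"
    if \<omega>: "\<omega> \<in> space P" and x: "x \<in> M" and e: "0 < e" for \<omega> x e
  proof -
    obtain s where s: "s \<in> D" "norm (x - s) \<le> e / (\<bar>L\<bar> + 1)"
      using D(3)[OF x, of "e / (\<bar>L\<bar> + 1)"] e by auto
    have "\<bar>g \<omega> x - g \<omega> s\<bar> \<le> \<bar>L\<bar> * norm (x - s)"
      using g_lip[OF \<omega> x, of s] s(1) D(2) abs_ge_self[of L]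
      by (meson mult_right_mono norm_ge_zero order_trans subsetD)
    also have "\<dots> \<le> \<bar>L\<bar> * (e / (\<bar>L\<bar> + 1))" using s(2) by (intro mult_left_mono) auto
    also have "\<dots> \<le> e" using e by (simp add: field_simps)
    finally show ?thesis using s(1) by blast
  qed
  have "{\<omega>\<in>space P. \<forall>x\<in>M. a \<le> g \<omega> x \<and> g \<omega> x \<le> b} = {\<omega>\<in>space P. \<forall>x\<in>D. a \<le> g \<omega> x \<and> g \<omega> x \<le> b}"
  proof (intro Collect_cong conj_cong refl iffI ballI)
    fix \<omega> x assume \<omega>: "\<omega> \<in> space P" and bounds: "\<forall>s\<in>D. a \<le> g \<omega> s \<and> g \<omega> s \<le> b" and x: "x \<in> M"
    have "a \<le> g \<omega> x + e" "g \<omega> x \<le> b + e" if "0 < e" for e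
      using approx[OF \<omega> x that] bounds by (auto simp: abs_le_iff)
    then show "a \<le> g \<omega> x \<and> g \<omega> x \<le> b" by (auto intro: field_le_epsilon)
  qed (use D(2) in auto)
  also have "\<dots> \<in> sets P"
    using g_meas D(1,2) by (intro sets.sets_Collect_countable_All') (auto simp: subset_eq)
  finally show ?thesis .
qed

section \<open>The Gaussian kernel\<close>

lemma abs_exp_neg_diff_le:
  fixes a b :: real
  assumes "0 \<le> a" "0 \<le> b"
  shows "\<bar>exp (-a) - exp (-b)\<bar> \<le> \<bar>a - b\<bar>"
proof -
  have le: "exp (-u) - exp (-v) \<le> v - u" if "0 \<le> u" "u \<le> v" for u v :: real
  proof -
    have "exp (-u) - exp (-v) = exp (-u) * (1 - exp (-(v - u)))"
      by (simp add: algebra_simps flip: exp_add)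
    also have "\<dots> \<le> 1 - exp (-(v - u))"
      using that by (intro mult_left_le_one_le) auto
    also have "\<dots> \<le> v - u"
      using exp_ge_add_one_self[of "-(v - u)"] by linarith
    finally show ?thesis .
  qed
  show ?thesis
    using le[of a b] le[of b a] assms by (cases "a \<le> b") auto
qed

lemma Kern_commute: "Kern e x y = Kern e y x"
  by (simp add: Kern_def norm_minus_commute)

lemma Kern_pos: "0 < Kern e x y"
  by (simp add: Kern_def)

lemma Kern_le_1: "0 < e \<Longrightarrow> Kern e x y \<le> 1"
  by (simp add: Kern_def)

lemma Kern_lipschitz:
  fixes x x' z :: "'a::euclidean_space"
  assumes e: "0 < e" and R: "norm x \<le> R" "norm x' \<le> R" "norm z \<le> R"
  shows "\<bar>Kern e x z - Kern e x' z\<bar> \<le> 4 * R / e * norm (x - x')"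
proof -
  define a where "a = norm (x - z)"
  define b where "b = norm (x' - z)"
  have a: "0 \<le> a" "a \<le> 2 * R" unfolding a_def using R norm_triangle_ineq4[of x z] by auto
  have b: "0 \<le> b" "b \<le> 2 * R" unfolding b_def using R norm_triangle_ineq4[of x' z] by auto
  have ab: "\<bar>a - b\<bar> \<le> norm (x - x')"
    unfolding a_def b_def using norm_triangle_ineq3[of "x - z" "x' - z"] by simp
  have "\<bar>Kern e x z - Kern e x' z\<bar> = \<bar>exp (-(a\<^sup>2 / e)) - exp (-(b\<^sup>2 / e))\<bar>"
    by (simp add: Kern_def a_def b_def)
  also have "\<dots> \<le> \<bar>a\<^sup>2 / e - b\<^sup>2 / e\<bar>"
    by (rule abs_exp_neg_diff_le) (use e in auto)
  also have "\<dots> = \<bar>a - b\<bar> * (a + b) / e"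
  proof -
    have "a\<^sup>2 / e - b\<^sup>2 / e = (a - b) * (a + b) / e"
      by (simp add: power2_eq_square algebra_simps flip: diff_divide_distrib)
    then show ?thesis using a b e by (simp add: abs_mult abs_divide)
  qed
  also have "\<dots> \<le> norm (x - x') * (4 * R) / e"
    using e a b ab by (intro divide_right_mono mult_mono) auto
  finally show ?thesis by (simp add: field_simps)
qed

definition Kern2 :: "real \<Rightarrow> 'a::euclidean_space \<Rightarrow> 'a \<Rightarrow> 'a \<Rightarrow> real" where
  "Kern2 e x z w = Kern e x w * Kern e w z"

lemma Kref_eq_integral_Kern2: "Kref dV pY e x z = (\<integral>w. Kern2 e x z w * pY w \<partial>dV)"
  by (simp add: Kref_def Kern2_def)

lemma dref_hat_eq_Kern2:
  "dref_hat e n m xs ys x = 1 / n * (\<Sum>i<n. 1 / m * (\<Sum>k<m. Kern2 e x (xs i) (ys k)))"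
  by (simp add: dref_hat_def Kern2_def)

lemma continuous_on_Kern2: "continuous_on S (Kern2 e x z)"
  unfolding Kern2_def Kern_def divide_inverse by (intro continuous_intros)

lemma Kern2_nonneg: "0 \<le> Kern2 e x z w"
  by (simp add: Kern2_def Kern_pos less_imp_le)

lemma Kern2_le_1: "0 < e \<Longrightarrow> Kern2 e x z w \<le> 1"
  unfolding Kern2_def by (intro mult_le_one Kern_le_1 less_imp_le[OF Kern_pos])

lemma Kern2_lipschitz:
  assumes e: "0 < e"
    and R: "norm x \<le> R" "norm x' \<le> R" "norm z \<le> R" "norm z' \<le> R" "norm w \<le> R"
  shows "\<bar>Kern2 e x z w - Kern2 e x' z' w\<bar> \<le> 4 * R / e * (norm (x - x') + norm (z - z'))"
proof -
  have "Kern2 e x z w - Kern2 e x' z' w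
      = (Kern e x w - Kern e x' w) * Kern e w z + Kern e x' w * (Kern e z w - Kern e z' w)"
    by (simp add: Kern2_def Kern_commute[of e w] algebra_simps)
  also have "\<bar>\<dots>\<bar> \<le> \<bar>Kern e x w - Kern e x' w\<bar> + \<bar>Kern e z w - Kern e z' w\<bar>"
  proof -
    have K: "\<bar>Kern e u v\<bar> \<le> 1" for u v
      using Kern_pos[of e u v] Kern_le_1[OF e, of u v] by simp
    show ?thesis
      using K[of w z] K[of x' w]
      by (intro order_trans[OF abs_triangle_ineq] add_mono)
        (auto simp: abs_mult intro: mult_right_le_one_le mult_left_le_one_le)
  qed
  also have "\<dots> \<le> 4 * R / e * norm (x - x') + 4 * R / e * norm (z - z')"
    using Kern_lipschitz[OF e R(1,2,5)] Kern_lipschitz[OF e R(3,4,5)] by simp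
  finally show ?thesis by (simp add: algebra_simps)
qed

lemma abs_mean_diff_le:
  fixes a b :: "nat \<Rightarrow> real"
  assumes "\<And>i. i < n \<Longrightarrow> \<bar>a i - b i\<bar> \<le> c" "0 \<le> c"
  shows "\<bar>1 / n * (\<Sum>i<n. a i) - 1 / n * (\<Sum>i<n. b i)\<bar> \<le> c"
proof (cases "n = 0")
  case False
  have "\<bar>\<Sum>i<n. a i - b i\<bar> \<le> (\<Sum>i<n. \<bar>a i - b i\<bar>)" by (rule sum_abs)
  also have "\<dots> \<le> n * c" using sum_mono[of "{..<n}" "\<lambda>i. \<bar>a i - b i\<bar>" "\<lambda>_. c"] assms by simp
  finally show ?thesis
    using False by (simp add: sum_subtractf abs_divide field_simps flip: right_diff_distrib)
qed (use assms in simp)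

lemma integral_bounded_times_density:
  fixes p f :: "'x \<Rightarrow> real"
  assumes p: "integrable N p" "\<And>x. x \<in> space N \<Longrightarrow> 0 \<le> p x"
    and f: "f \<in> borel_measurable N" "\<And>x. x \<in> space N \<Longrightarrow> \<bar>f x\<bar> \<le> B"
  shows "integrable N (\<lambda>x. f x * p x)" and "\<bar>\<integral>x. f x * p x \<partial>N\<bar> \<le> B * (\<integral>x. p x \<partial>N)"
proof -
  have bound: "\<bar>f x * p x\<bar> \<le> B * p x" if "x \<in> space N" for x
    using f(2)[OF that] p(2)[OF that] by (simp add: abs_mult mult_right_mono)
  have Bp: "integrable N (\<lambda>x. B * p x)" using p(1) by simp
  show int: "integrable N (\<lambda>x. f x * p x)"
  proof (rule Bochner_Integration.integrable_bound[OF Bp])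
    show "(\<lambda>x. f x * p x) \<in> borel_measurable N"
      using f(1) borel_measurable_integrable[OF p(1)] by measurable
    show "AE x in N. norm (f x * p x) \<le> norm (B * p x)"
      using bound by (intro AE_I2) (auto intro: order_trans[OF _ abs_ge_self])
  qed
  have "\<bar>\<integral>x. f x * p x \<partial>N\<bar> \<le> (\<integral>x. \<bar>f x * p x\<bar> \<partial>N)" by (rule integral_abs_bound)
  also have "\<dots> \<le> (\<integral>x. B * p x \<partial>N)"
    using bound by (intro integral_mono integrable_abs[OF int] Bp) auto
  finally show "\<bar>\<integral>x. f x * p x \<partial>N\<bar> \<le> B * (\<integral>x. p x \<partial>N)" by simp
qed

section \<open>Asymptotics of the tail bound\<close>

text \<open>\<open>(B / e^(d+1))^(2D)\<close> bounds the squared size of the net of radius \<open>\<sim> e^(d+1)\<close> used below,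
  and \<open>2 exp (-N K e^(2d))\<close> is the Hoeffding tail for \<open>N\<close> samples and a deviation of order \<open>e^d\<close>.\<close>

definition net_tail_bound :: "real \<Rightarrow> nat \<Rightarrow> nat \<Rightarrow> real \<Rightarrow> real \<Rightarrow> real \<Rightarrow> real" where
  "net_tail_bound B D d K e N = (B / e ^ (d + 1)) ^ (2 * D) * 2 * exp (- (N * K * e ^ (2 * d)))"

lemma hoeffding_tail_le_net_tail_bound:
  fixes B C e c :: real and D d N :: nat
  assumes "c \<le> (B / e ^ (d + 1)) ^ (2 * D)"
  shows "c * (2 * exp (-2 * real N * (C * e ^ d / 8)\<^sup>2)) \<le> net_tail_bound B D d (C\<^sup>2 / 32) e N"
proof -
  have eq: "-2 * real N * (C * e ^ d / 8)\<^sup>2 = - (N * (C\<^sup>2 / 32) * e ^ (2 * d))"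
    by (simp add: power_mult_distrib power_mult power2_eq_square)
  show ?thesis
    unfolding net_tail_bound_def eq
    using mult_right_mono[OF assms, of "2 * exp (- (N * (C\<^sup>2 / 32) * e ^ (2 * d)))"]
    by (simp add: mult.assoc)
qed

lemma net_tail_bound_le_inverse_square:
  fixes B K e N :: real and D d :: nat
  assumes e: "0 < e" "e < 1" and B: "0 < B" and N: "1 \<le> N"
    and exponent: "2 * D * max 0 (ln B) + ln 2 + 2 * D * (d + 1) * (- ln e) + 2 * ln N
                     \<le> K * (N * e ^ (2 * d))"
  shows "net_tail_bound B D d K e N \<le> 1 / N\<^sup>2"
proof -
  define q where "q = B / e ^ (d + 1)"
  have q: "0 < q" using B e by (simp add: q_def)
  have "ln q = ln B - ln (e ^ (d + 1))"
    unfolding q_def using B e by (simp add: ln_div)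
  also have "ln (e ^ (d + 1)) = (d + 1) * ln e"
    by (rule ln_realpow)
  finally have "ln q \<le> max 0 (ln B) + (d + 1) * (- ln e)"
    using max.cobounded2[of 0 "ln B"] by simp
  have lnq: "2 * D * ln q \<le> 2 * D * max 0 (ln B) + 2 * D * (d + 1) * (- ln e)"
    using mult_left_mono[OF \<open>ln q \<le> _\<close>, of "2 * real D"] by (simp add: algebra_simps)
  have "q ^ (2 * D) = exp (2 * D * ln q)"
    using q exp_of_nat_mult[of "2 * D" "ln q"] by simp
  then have "net_tail_bound B D d K e N = exp (2 * D * ln q + ln 2 - K * (N * e ^ (2 * d)))"
    unfolding net_tail_bound_def q_def[symmetric]
    by (simp add: exp_add exp_diff exp_minus divide_inverse mult_ac)
  also have "\<dots> \<le> exp (- (2 * ln N))"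
    by (subst exp_le_cancel_iff) (use exponent lnq in linarith)
  also have "\<dots> = 1 / N\<^sup>2"
    using N exp_of_nat_mult[of 2 "ln N"] by (simp add: exp_minus divide_inverse)
  finally show ?thesis .
qed

lemma log_terms_le_of_rate_bound:
  fixes e \<eta> N :: real and d :: nat
  assumes e: "0 < e" "e < 1" and N: "1 < N" and \<eta>: "0 < \<eta>"
    and rate: "(sqrt (- ln e) + sqrt (ln N)) / (sqrt N * e ^ d) < sqrt \<eta>"
  shows "- ln e \<le> \<eta> * (N * e ^ (2 * d))" and "ln N \<le> \<eta> * (N * e ^ (2 * d))"
proof -
  have den: "0 < sqrt N * e ^ d" using e N by simp
  have "sqrt \<eta> * (sqrt N * e ^ d) = sqrt (\<eta> * (N * e ^ (2 * d)))"
    using e N \<eta> by (simp add: real_sqrt_mult power_mult real_sqrt_power)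
  then have lt: "sqrt (- ln e) + sqrt (ln N) < sqrt (\<eta> * (N * e ^ (2 * d)))"
    using rate den by (simp add: divide_less_eq mult.commute)
  have "0 \<le> sqrt (- ln e)" "0 \<le> sqrt (ln N)" using e N by simp_all
  then have "sqrt (- ln e) \<le> sqrt (\<eta> * (N * e ^ (2 * d)))" "sqrt (ln N) \<le> sqrt (\<eta> * (N * e ^ (2 * d)))"
    using lt by linarith+
  then show "- ln e \<le> \<eta> * (N * e ^ (2 * d))" and "ln N \<le> \<eta> * (N * e ^ (2 * d))"
    by simp_all
qed

lemma eventually_floor_powr:
  fixes \<beta> T :: real and m :: "nat \<Rightarrow> nat"
  assumes m_def: "\<And>n. m n = nat \<lfloor>real n powr \<beta>\<rfloor>" and \<beta>: "0 < \<beta>" "\<beta> < 1"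
  shows "\<forall>\<^sub>F n in sequentially. 1 < m n \<and> T \<le> ln (m n) \<and> m n \<le> n \<and> \<beta> * ln n \<le> ln 2 + ln (m n)"
proof -
  have "\<forall>\<^sub>F n in sequentially. max 2 (exp T) + 1 \<le> real n powr \<beta>"
    using filterlim_compose[OF real_powr_at_top[OF \<beta>(1)] filterlim_real_sequentially]
    unfolding filterlim_at_top by blast
  then show ?thesis
  proof eventually_elim
    case (elim n)
    have "real (m n) = of_int \<lfloor>real n powr \<beta>\<rfloor>" using m_def[of n] by simp
    then have m: "real n powr \<beta> - 1 < m n" "m n \<le> real n powr \<beta>" by linarith+
    then have m_exp: "max 2 (exp T) < m n" using elim by linarith
    have n: "1 \<le> real n"
      using elim by (cases "n = 0") auto
    have "real n powr \<beta> \<le> real n powr 1" using n \<beta> by (intro powr_mono) auto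
    then have "m n \<le> n" using m n by simp
    moreover have "\<beta> * ln n = ln (real n powr \<beta>)" using n by (simp add: ln_powr)
    moreover have "ln (real n powr \<beta>) \<le> ln (2 * m n)"
      using m m_exp n by (intro ln_mono) auto
    ultimately show ?case
      using m_exp by (auto simp: ln_mult ln_ge_iff)
  qed
qed

lemma net_exponent_bound:
  fixes \<beta> K \<eta> a c Q Q' e x N :: real
  assumes \<beta>: "0 < \<beta>" "\<beta> \<le> 1" and a: "0 \<le> a" and \<eta>: "(a + 2 / \<beta>) * \<eta> = K / 2"
    and log_e: "- ln e \<le> \<eta> * Q" and log_x: "ln x \<le> \<eta> * Q" and c: "c + 2 * ln 2 / \<beta> \<le> (a + 2 / \<beta>) * ln x"
    and log_N: "ln N \<le> (ln 2 + ln x) / \<beta>" and Q: "0 \<le> Q" "Q \<le> Q'" and K: "0 \<le> K"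
  shows "c + a * (- ln e) + 2 * ln N \<le> K * Q'"
proof -
  have s: "0 \<le> a + 2 / \<beta>" using a \<beta> by simp
  have "a * (- ln e) \<le> a * (\<eta> * Q)" using log_e a by (rule mult_left_mono)
  moreover have "2 * ln N \<le> 2 * ln 2 / \<beta> + 2 / \<beta> * ln x"
    using log_N \<beta> by (simp add: field_simps)
  moreover have "2 / \<beta> * ln x \<le> 2 / \<beta> * (\<eta> * Q)" using log_x \<beta> by (intro mult_left_mono) auto
  moreover have "(a + 2 / \<beta>) * ln x \<le> (a + 2 / \<beta>) * (\<eta> * Q)" using log_x s by (rule mult_left_mono)
  moreover have "(a + 2 / \<beta>) * (\<eta> * Q) = K / 2 * Q" using \<eta> by (metis mult.assoc)
  moreover have "a * (\<eta> * Q) + 2 / \<beta> * (\<eta> * Q) = (a + 2 / \<beta>) * (\<eta> * Q)" by (simp add: distrib_right)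
  moreover have "K * Q \<le> K * Q'" using K Q by (simp add: mult_left_mono)
  ultimately show ?thesis using c by linarith
qed

lemma eventually_net_tail_bound_le:
  fixes \<epsilon> :: "nat \<Rightarrow> real" and m :: "nat \<Rightarrow> nat" and \<beta> K B :: real and d D :: nat
  assumes \<epsilon>: "\<And>n. 0 < \<epsilon> n" "\<epsilon> \<longlonglongrightarrow> 0"
    and m_def: "\<And>n. m n = nat \<lfloor>real n powr \<beta>\<rfloor>" and \<beta>: "0 < \<beta>" "\<beta> < 1"
    and rate: "(\<lambda>n. (sqrt (- ln (\<epsilon> n)) + sqrt (ln (m n))) / (sqrt (m n) * \<epsilon> n ^ d)) \<longlonglongrightarrow> 0"
    and K: "0 < K" and B: "0 < B"
  shows "\<forall>\<^sub>F n in sequentially. 0 < m n \<and> m n \<le> n \<and> \<epsilon> n < 1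
           \<and> net_tail_bound B D d K (\<epsilon> n) (m n) \<le> 1 / (real (m n))\<^sup>2
           \<and> net_tail_bound B D d K (\<epsilon> n) n \<le> 1 / (real n)\<^sup>2"
proof -
  define a :: real where "a = 2 * D * (d + 1)"
  define c where "c = 2 * D * max 0 (ln B) + ln 2"
  define s where "s = a + 2 / \<beta>"
  \<comment> \<open>the rate assumption gives \<open>-ln \<epsilon>, ln m \<le> \<eta> m \<epsilon>^(2d)\<close>; this \<open>\<eta>\<close> absorbs them into \<open>K m \<epsilon>^(2d) / 2\<close>\<close>
  define \<eta> where "\<eta> = K / (2 * s)"
  have a: "0 \<le> a" by (simp add: a_def)
  have s: "0 < s" using a \<beta> by (simp add: s_def add_nonneg_pos)
  then have \<eta>: "0 < \<eta>" "(a + 2 / \<beta>) * \<eta> = K / 2"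
    using K by (simp_all add: \<eta>_def flip: s_def)
  have "\<forall>\<^sub>F n in sequentially. \<epsilon> n < 1"
    using order_tendstoD(2)[OF \<epsilon>(2)] by simp
  moreover have "\<forall>\<^sub>F n in sequentially.
      (sqrt (- ln (\<epsilon> n)) + sqrt (ln (m n))) / (sqrt (m n) * \<epsilon> n ^ d) < sqrt \<eta>"
    using order_tendstoD(2)[OF rate] \<eta> by simp
  moreover note eventually_floor_powr[OF m_def \<beta>, of "(c + 2 * ln 2 / \<beta>) / s"]
  ultimately show ?thesis
  proof eventually_elim
    case (elim n)
    define Q where "Q = m n * \<epsilon> n ^ (2 * d)"
    have m: "1 < real (m n)" "m n \<le> n" using elim by auto
    note logs = log_terms_le_of_rate_bound[OF \<epsilon>(1) elim(1) m(1) \<eta>(1) elim(2), folded Q_def]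
    have c: "c + 2 * ln 2 / \<beta> \<le> (a + 2 / \<beta>) * ln (m n)"
      using elim s by (simp add: divide_le_eq mult.commute flip: s_def)
    have log_n: "ln n \<le> (ln 2 + ln (m n)) / \<beta>"
      using elim \<beta> by (simp add: le_divide_eq mult.commute)
    have "ln (m n) \<le> ln n" using m by simp
    with log_n have log_m: "ln (m n) \<le> (ln 2 + ln (m n)) / \<beta>" by linarith
    have tail: "net_tail_bound B D d K (\<epsilon> n) N \<le> 1 / N\<^sup>2"
      if "1 \<le> N" "ln N \<le> (ln 2 + ln (m n)) / \<beta>" "Q \<le> N * \<epsilon> n ^ (2 * d)" for N
      using net_exponent_bound[OF \<beta>(1) _ a \<eta>(2) logs c that(2) _ that(3)] \<beta> \<epsilon>(1) elim B K that(1)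
      by (intro net_tail_bound_le_inverse_square) (auto simp: a_def c_def Q_def)
    have "net_tail_bound B D d K (\<epsilon> n) (m n) \<le> 1 / (real (m n))\<^sup>2"
      using m log_m by (intro tail) (auto simp: Q_def)
    moreover have "net_tail_bound B D d K (\<epsilon> n) n \<le> 1 / (real n)\<^sup>2"
      using m log_n \<epsilon>(1) by (intro tail) (auto simp: Q_def mult_right_mono)
    ultimately show ?case using elim by simp
  qed
qed

section \<open>Uniform bounds for the degree functions\<close>

locale ref_kernel_samples = prob_space P
  for P :: "'w measure" +
  fixes dV :: "'a::euclidean_space measure" and M :: "'a set"
    and X Y :: "nat \<Rightarrow> 'w \<Rightarrow> 'a" and pX pY :: "'a \<Rightarrow> real" and R :: real
  assumes space_dV: "space dV = M" and sets_dV: "sets dV = sets (restrict_space borel M)"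
    and R_pos: "0 < R" and norm_le_R: "\<And>x. x \<in> M \<Longrightarrow> norm x \<le> R"
    and pX_nonneg: "\<And>x. x \<in> M \<Longrightarrow> 0 \<le> pX x" and pY_nonneg: "\<And>x. x \<in> M \<Longrightarrow> 0 \<le> pY x"
    and X_distr: "\<And>i. distributed P dV (X i) (\<lambda>x. ennreal (pX x))"
    and Y_distr: "\<And>k. distributed P dV (Y k) (\<lambda>y. ennreal (pY y))"
    and indep_X: "\<And>n. indep_vars (\<lambda>_. dV) X {..<n}"
    and indep_Y: "\<And>n. indep_vars (\<lambda>_. dV) Y {..<n}"
begin

lemma bounded_M: "bounded M"
  using norm_le_R unfolding bounded_iff by blast

lemma X_measurable: "X i \<in> measurable P dV" and Y_measurable: "Y i \<in> measurable P dV"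
  using X_distr Y_distr by (simp_all add: distributed_def)

lemma X_in_M: "\<omega> \<in> space P \<Longrightarrow> X i \<omega> \<in> M" and Y_in_M: "\<omega> \<in> space P \<Longrightarrow> Y i \<omega> \<in> M"
  using measurable_space[OF X_measurable] measurable_space[OF Y_measurable] space_dV by auto

lemma X_borel: "X i \<in> borel_measurable P" and Y_borel: "Y i \<in> borel_measurable P"
proof -
  have "(\<lambda>x. x) \<in> measurable dV borel"
    unfolding measurable_cong_sets[OF sets_dV refl] by (rule measurable_restrict_space1) simp
  then show "X i \<in> borel_measurable P" "Y i \<in> borel_measurable P"
    using measurable_compose[OF X_measurable] measurable_compose[OF Y_measurable] by auto
qed

lemma measurable_dV_of_continuous: "continuous_on M f \<Longrightarrow> f \<in> borel_measurable dV"
  unfolding measurable_cong_sets[OF sets_dV refl] by (rule borel_measurable_continuous_on_restrict)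

lemma integrable_pY: "integrable dV pY" and integral_pY: "(\<integral>x. pY x \<partial>dV) = 1"
proof -
  have "integrable dV (\<lambda>x. pY x * 1) \<longleftrightarrow> integrable P (\<lambda>_. 1::real)"
    and "(\<integral>x. pY x * 1 \<partial>dV) = (\<integral>_. 1 \<partial>P)"
    using distributed_integrable[OF Y_distr[of 0], of "\<lambda>_. 1"]
      distributed_integral[OF Y_distr[of 0], of "\<lambda>_. 1"] pY_nonneg space_dV by auto
  then show "integrable dV pY" "(\<integral>x. pY x \<partial>dV) = 1" by (simp_all add: prob_space)
qed

lemma Kref_nonneg: "0 \<le> Kref dV pY e x z"
  unfolding Kref_eq_integral_Kern2 using pY_nonneg
  by (intro integral_nonneg_AE AE_I2 mult_nonneg_nonneg Kern2_nonneg) (auto simp: space_dV)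

lemma Kref_le_1:
  assumes "0 < e" shows "Kref dV pY e x z \<le> 1"
proof -
  have "\<bar>\<integral>w. Kern2 e x z w * pY w \<partial>dV\<bar> \<le> 1 * (\<integral>w. pY w \<partial>dV)"
    using Kern2_nonneg[of e x z] Kern2_le_1[OF assms, of x z] pY_nonneg
    by (intro integral_bounded_times_density(2)[OF integrable_pY] measurable_dV_of_continuous
        continuous_on_Kern2) (auto simp: space_dV)
  then show ?thesis by (simp add: Kref_eq_integral_Kern2 integral_pY)
qed

lemma Kref_lipschitz:
  assumes e: "0 < e" and pts: "x \<in> M" "x' \<in> M" "z \<in> M" "z' \<in> M"
  shows "\<bar>Kref dV pY e x z - Kref dV pY e x' z'\<bar> \<le> 4 * R / e * (norm (x - x') + norm (z - z'))"
proof -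
  note density = integrable_pY pY_nonneg[unfolded space_dV[symmetric]]
  have int: "integrable dV (\<lambda>w. Kern2 e u v w * pY w)" for u v
  proof -
    have "\<bar>Kern2 e u v w\<bar> \<le> 1" for w
      using Kern2_nonneg[of e u v w] Kern2_le_1[OF e, of u v w] by simp
    then show ?thesis
    by (intro integral_bounded_times_density(1)[OF density measurable_dV_of_continuous, of _ 1])
      (auto intro: continuous_on_Kern2)
  qed
  have "Kref dV pY e x z - Kref dV pY e x' z' = (\<integral>w. (Kern2 e x z w - Kern2 e x' z' w) * pY w \<partial>dV)"
    unfolding Kref_eq_integral_Kern2 using int by (simp add: left_diff_distrib)
  also have "\<bar>\<dots>\<bar> \<le> 4 * R / e * (norm (x - x') + norm (z - z')) * (\<integral>w. pY w \<partial>dV)"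
  proof (intro integral_bounded_times_density(2)[OF density] measurable_dV_of_continuous
      continuous_intros continuous_on_Kern2)
    fix w assume "w \<in> space dV"
    then show "\<bar>Kern2 e x z w - Kern2 e x' z' w\<bar> \<le> 4 * R / e * (norm (x - x') + norm (z - z'))"
      using Kern2_lipschitz[OF e norm_le_R[OF pts(1)] norm_le_R[OF pts(2)] norm_le_R[OF pts(3)]
          norm_le_R[OF pts(4)] norm_le_R] space_dV by simp
  qed
  finally show ?thesis by (simp add: integral_pY)
qed

lemma Kref_measurable:
  assumes e: "0 < e" and x: "x \<in> M"
  shows "Kref dV pY e x \<in> borel_measurable dV"
proof (intro measurable_dV_of_continuous lipschitz_on_continuous_on)
  show "(4 * R / e)-lipschitz_on M (Kref dV pY e x)"
    using Kref_lipschitz[OF e x x] R_pos e by (intro lipschitz_onI) (auto simp: dist_real_def dist_norm)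
qed

lemma dref_n_lipschitz:
  assumes e: "0 < e" and xs: "\<And>i. xs i \<in> M" and pts: "x \<in> M" "x' \<in> M"
  shows "\<bar>dref_n dV pY e n xs x - dref_n dV pY e n xs x'\<bar> \<le> 4 * R / e * norm (x - x')"
  unfolding dref_n_def
proof (rule abs_mean_diff_le)
  show "\<bar>Kref dV pY e x (xs i) - Kref dV pY e x' (xs i)\<bar> \<le> 4 * R / e * norm (x - x')" for i
    using Kref_lipschitz[OF e pts xs[of i] xs[of i]] by simp
qed (use R_pos e in simp)

lemma dref_hat_lipschitz:
  assumes e: "0 < e" and xs: "\<And>i. xs i \<in> M" and ys: "\<And>k. ys k \<in> M" and pts: "x \<in> M" "x' \<in> M"
  shows "\<bar>dref_hat e n m xs ys x - dref_hat e n m xs ys x'\<bar> \<le> 4 * R / e * norm (x - x')"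
  unfolding dref_hat_eq_Kern2
proof (intro abs_mean_diff_le)
  show "\<bar>Kern2 e x (xs i) (ys k) - Kern2 e x' (xs i) (ys k)\<bar> \<le> 4 * R / e * norm (x - x')" for i k
    using Kern2_lipschitz[OF e norm_le_R[OF pts(1)] norm_le_R[OF pts(2)] norm_le_R[OF xs[of i]]
        norm_le_R[OF xs[of i]] norm_le_R[OF ys[of k]]] by simp
qed (use R_pos e in simp_all)

lemma prob_dref_n_net_deviation:
  assumes e: "0 < e" and n: "0 < n" and S: "finite S" "S \<subseteq> M" and \<delta>: "0 \<le> \<delta>"
  defines "B \<equiv> {\<omega>\<in>space P. \<exists>s\<in>S. \<delta> \<le> \<bar>(\<Sum>i<n. Kref dV pY e s (X i \<omega>)) / n - dref dV pX pY e s\<bar>}"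
  shows "B \<in> events" and "prob B \<le> card S * (2 * exp (-2 * real n * \<delta>\<^sup>2))"
proof -
  have eq: "dref dV pX pY e s = (\<integral>y. pX y * Kref dV pY e s y \<partial>dV)" for s
    by (simp add: dref_def mult.commute)
  have "Kref dV pY e s \<in> borel_measurable dV" if "s \<in> S" for s
    using that S(2) Kref_measurable[OF e] by auto
  moreover have "0 \<le> Kref dV pY e s y \<and> Kref dV pY e s y \<le> 1" for s y
    using Kref_nonneg Kref_le_1[OF e] by auto
  moreover have "0 \<le> pX x" if "x \<in> space dV" for x
    using that pX_nonneg by (simp add: space_dV)
  ultimately show "B \<in> events" "prob B \<le> card S * (2 * exp (-2 * real n * \<delta>\<^sup>2))"
    unfolding B_def eq using prob_mean_deviation_finite_family[OF n indep_X X_distr _ S(1) _ _ \<delta>]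
    by blast+
qed

lemma prob_Kref_net_deviation:
  assumes e: "0 < e" and m: "0 < m" and S: "finite S" "S \<subseteq> M" and \<delta>: "0 \<le> \<delta>"
  defines "B \<equiv> {\<omega>\<in>space P. \<exists>t\<in>S \<times> S. \<delta> \<le> \<bar>(\<Sum>k<m. Kern2 e (fst t) (snd t) (Y k \<omega>)) / m
                                              - Kref dV pY e (fst t) (snd t)\<bar>}"
  shows "B \<in> events" and "prob B \<le> card (S \<times> S) * (2 * exp (-2 * real m * \<delta>\<^sup>2))"
proof -
  have eq: "Kref dV pY e s s' = (\<integral>y. pY y * Kern2 e s s' y \<partial>dV)" for s s'
    by (simp add: Kref_eq_integral_Kern2 mult.commute)
  have "Kern2 e (fst t) (snd t) \<in> borel_measurable dV" for t
    by (intro measurable_dV_of_continuous continuous_on_Kern2)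
  moreover have "0 \<le> Kern2 e (fst t) (snd t) y \<and> Kern2 e (fst t) (snd t) y \<le> 1" for t y
    using Kern2_nonneg Kern2_le_1[OF e] by auto
  moreover have "0 \<le> pY x" if "x \<in> space dV" for x
    using that pY_nonneg by (simp add: space_dV)
  ultimately show "B \<in> events" "prob B \<le> card (S \<times> S) * (2 * exp (-2 * real m * \<delta>\<^sup>2))"
    unfolding B_def eq
    using prob_mean_deviation_finite_family[where F = "\<lambda>t. Kern2 e (fst t) (snd t)",
        OF m indep_Y Y_distr _ finite_cartesian_product[OF S(1) S(1)] _ _ \<delta>]
    by blast+
qed

lemma dref_n_bounds_of_net_accuracy:
  assumes e: "0 < e" and \<omega>: "\<omega> \<in> space P" and S: "S \<subseteq> M"
    and net: "\<And>x. x \<in> M \<Longrightarrow> \<exists>s\<in>S. norm (x - s) \<le> r"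
    and acc: "\<forall>s\<in>S. \<bar>(\<Sum>i<n. Kref dV pY e s (X i \<omega>)) / n - dref dV pX pY e s\<bar> < \<delta>"
    and bounds: "\<forall>s\<in>M. lo \<le> dref dV pX pY e s \<and> dref dV pX pY e s \<le> hi"
    and x: "x \<in> M"
  shows "lo - (\<delta> + 4 * R / e * r) \<le> dref_n dV pY e n (\<lambda>i. X i \<omega>) x
       \<and> dref_n dV pY e n (\<lambda>i. X i \<omega>) x \<le> hi + (\<delta> + 4 * R / e * r)"
proof -
  obtain s where s: "s \<in> S" "norm (x - s) \<le> r" using net[OF x] by blast
  have "\<bar>dref_n dV pY e n (\<lambda>i. X i \<omega>) x - dref_n dV pY e n (\<lambda>i. X i \<omega>) s\<bar> \<le> 4 * R / e * norm (x - s)"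
    using s S X_in_M[OF \<omega>] by (intro dref_n_lipschitz[OF e _ x]) auto
  also have "\<dots> \<le> 4 * R / e * r" using s R_pos e by (intro mult_left_mono) auto
  finally have "\<bar>dref_n dV pY e n (\<lambda>i. X i \<omega>) x - dref_n dV pY e n (\<lambda>i. X i \<omega>) s\<bar> \<le> 4 * R / e * r" .
  moreover have "\<bar>dref_n dV pY e n (\<lambda>i. X i \<omega>) s - dref dV pX pY e s\<bar> < \<delta>"
    using acc s(1) by (simp add: dref_n_def)
  moreover have "lo \<le> dref dV pX pY e s \<and> dref dV pX pY e s \<le> hi"
    using bounds s S by blast
  ultimately show ?thesis by (simp only: abs_le_iff abs_less_iff) linarith
qed

lemma dref_hat_near_dref_n_of_net_accuracy:
  assumes e: "0 < e" and \<omega>: "\<omega> \<in> space P" and S: "S \<subseteq> M"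
    and net: "\<And>x. x \<in> M \<Longrightarrow> \<exists>s\<in>S. norm (x - s) \<le> r"
    and acc: "\<forall>t\<in>S \<times> S. \<bar>(\<Sum>k<m. Kern2 e (fst t) (snd t) (Y k \<omega>)) / m
                         - Kref dV pY e (fst t) (snd t)\<bar> < \<delta>"
    and \<delta>: "0 \<le> \<delta>" and r: "0 \<le> r" and x: "x \<in> M"
  shows "\<bar>dref_hat e n m (\<lambda>i. X i \<omega>) (\<lambda>k. Y k \<omega>) x - dref_n dV pY e n (\<lambda>i. X i \<omega>) x\<bar>
           \<le> \<delta> + 16 * R / e * r"
  unfolding dref_hat_eq_Kern2 dref_n_def
proof (rule abs_mean_diff_le)
  fix i
  obtain s where s: "s \<in> S" "norm (x - s) \<le> r" using net[OF x] by blast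
  obtain s' where s': "s' \<in> S" "norm (X i \<omega> - s') \<le> r" using net[OF X_in_M[OF \<omega>]] by blast
  have pts: "s \<in> M" "s' \<in> M" "X i \<omega> \<in> M" using s s' S X_in_M[OF \<omega>] by auto
  have "4 * R / e * (norm (x - s) + norm (X i \<omega> - s')) \<le> 4 * R / e * (r + r)"
    using s s' R_pos e by (intro mult_left_mono) auto
  then have near: "4 * R / e * (norm (x - s) + norm (X i \<omega> - s')) \<le> 8 * R / e * r"
    by simp
  have "\<bar>1 / m * (\<Sum>k<m. Kern2 e x (X i \<omega>) (Y k \<omega>)) - 1 / m * (\<Sum>k<m. Kern2 e s s' (Y k \<omega>))\<bar>
      \<le> 8 * R / e * r"
  proof (rule abs_mean_diff_le)
    show "\<bar>Kern2 e x (X i \<omega>) (Y k \<omega>) - Kern2 e s s' (Y k \<omega>)\<bar> \<le> 8 * R / e * r" for k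
      using Kern2_lipschitz[OF e norm_le_R[OF x] norm_le_R[OF pts(1)] norm_le_R[OF pts(3)]
          norm_le_R[OF pts(2)] norm_le_R[OF Y_in_M[OF \<omega>, of k]]] near
      by linarith
  qed (use R_pos e r in simp)
  moreover have "\<bar>1 / m * (\<Sum>k<m. Kern2 e s s' (Y k \<omega>)) - Kref dV pY e s s'\<bar> < \<delta>"
    using acc s(1) s'(1) by auto
  moreover have "\<bar>Kref dV pY e s s' - Kref dV pY e x (X i \<omega>)\<bar> \<le> 8 * R / e * r"
    using Kref_lipschitz[OF e pts(1) x pts(2,3)] near by (simp add: norm_minus_commute)
  ultimately show "\<bar>1 / m * (\<Sum>k<m. Kern2 e x (X i \<omega>) (Y k \<omega>)) - Kref dV pY e x (X i \<omega>)\<bar>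
      \<le> \<delta> + 16 * R / e * r"
    by (simp only: abs_le_iff abs_less_iff) linarith
qed (use R_pos e \<delta> r in simp)

lemma M_nonempty: "M \<noteq> {}"
  using X_in_M not_empty by blast

lemma sets_dref_n_bounds:
  assumes e: "0 < e"
  shows "{\<omega>\<in>space P. \<forall>x\<in>M. a \<le> dref_n dV pY e n (\<lambda>i. X i \<omega>) x \<and> dref_n dV pY e n (\<lambda>i. X i \<omega>) x \<le> b}
           \<in> events"
proof (rule sets_Collect_Lipschitz_bounds[OF bounded_M])
  fix x assume x: "x \<in> M"
  have [measurable]: "(\<lambda>\<omega>. Kref dV pY e x (X i \<omega>)) \<in> borel_measurable P" for i
    using measurable_compose[OF X_measurable Kref_measurable[OF e x]] by simp
  show "(\<lambda>\<omega>. dref_n dV pY e n (\<lambda>i. X i \<omega>) x) \<in> borel_measurable P"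
    unfolding dref_n_def by measurable
next
  fix \<omega> x x' assume "\<omega> \<in> space P" "x \<in> M" "x' \<in> M"
  then show "\<bar>dref_n dV pY e n (\<lambda>i. X i \<omega>) x - dref_n dV pY e n (\<lambda>i. X i \<omega>) x'\<bar>
      \<le> 4 * R / e * norm (x - x')"
    by (intro dref_n_lipschitz[OF e] X_in_M)
qed

lemma sets_dref_hat_bounds:
  assumes e: "0 < e"
  shows "{\<omega>\<in>space P. \<forall>x\<in>M. a \<le> dref_hat e n m (\<lambda>i. X i \<omega>) (\<lambda>k. Y k \<omega>) x
                            \<and> dref_hat e n m (\<lambda>i. X i \<omega>) (\<lambda>k. Y k \<omega>) x \<le> b} \<in> events"
proof (rule sets_Collect_Lipschitz_bounds[OF bounded_M])
  have [measurable]: "X i \<in> borel_measurable P" "Y i \<in> borel_measurable P" for i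
    using X_borel Y_borel by auto
  show "(\<lambda>\<omega>. dref_hat e n m (\<lambda>i. X i \<omega>) (\<lambda>k. Y k \<omega>) x) \<in> borel_measurable P" for x
    unfolding dref_hat_def Kern_def by measurable
next
  fix \<omega> x x' assume "\<omega> \<in> space P" "x \<in> M" "x' \<in> M"
  then show "\<bar>dref_hat e n m (\<lambda>i. X i \<omega>) (\<lambda>k. Y k \<omega>) x - dref_hat e n m (\<lambda>i. X i \<omega>) (\<lambda>k. Y k \<omega>) x'\<bar>
      \<le> 4 * R / e * norm (x - x')"
    by (intro dref_hat_lipschitz[OF e] X_in_M Y_in_M)
qed

lemma dref_bounds_of_net_accuracy:
  assumes e: "0 < e" and C1: "0 < C1"
    and dref_bounds: "\<forall>x\<in>M. C1 * e ^ d \<le> dref dV pX pY e x \<and> dref dV pX pY e x \<le> C2 * e ^ d"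
    and \<omega>: "\<omega> \<in> space P" and S: "S \<subseteq> M" and net: "\<And>x. x \<in> M \<Longrightarrow> \<exists>s\<in>S. norm (x - s) \<le> r"
    and r: "0 \<le> r" "16 * R / e * r \<le> C1 * e ^ d / 8"
    and acc_X: "\<forall>s\<in>S. \<bar>(\<Sum>i<n. Kref dV pY e s (X i \<omega>)) / n - dref dV pX pY e s\<bar> < C1 * e ^ d / 8"
    and x: "x \<in> M"
  shows "C1 * e ^ d / 2 \<le> dref_n dV pY e n (\<lambda>i. X i \<omega>) x
           \<and> dref_n dV pY e n (\<lambda>i. X i \<omega>) x \<le> 2 * C2 * e ^ d"
    and "\<forall>t\<in>S \<times> S. \<bar>(\<Sum>k<m. Kern2 e (fst t) (snd t) (Y k \<omega>)) / m - Kref dV pY e (fst t) (snd t)\<bar>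
                     < C1 * e ^ d / 8 \<Longrightarrow>
         C1 * e ^ d / 2 \<le> dref_hat e n m (\<lambda>i. X i \<omega>) (\<lambda>k. Y k \<omega>) x
           \<and> dref_hat e n m (\<lambda>i. X i \<omega>) (\<lambda>k. Y k \<omega>) x \<le> 2 * C2 * e ^ d"
proof -
  have C1e: "0 < C1 * e ^ d" using C1 e by simp
  moreover have "C1 * e ^ d \<le> C2 * e ^ d" using dref_bounds x by fastforce
  moreover have "0 \<le> 4 * R / e * r" "4 * R / e * r \<le> 16 * R / e * r"
    using R_pos e r by (simp_all add: field_simps)
  moreover note dref_n_bounds_of_net_accuracy[OF e \<omega> S net acc_X dref_bounds x]
  ultimately have dref_n: "C1 * e ^ d - C1 * e ^ d / 4 \<le> dref_n dV pY e n (\<lambda>i. X i \<omega>) x"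
    "dref_n dV pY e n (\<lambda>i. X i \<omega>) x \<le> C2 * e ^ d + C1 * e ^ d / 4" "C1 * e ^ d \<le> C2 * e ^ d"
    using r by linarith+
  then show "C1 * e ^ d / 2 \<le> dref_n dV pY e n (\<lambda>i. X i \<omega>) x
      \<and> dref_n dV pY e n (\<lambda>i. X i \<omega>) x \<le> 2 * C2 * e ^ d"
    using C1e by auto
  assume "\<forall>t\<in>S \<times> S. \<bar>(\<Sum>k<m. Kern2 e (fst t) (snd t) (Y k \<omega>)) / m - Kref dV pY e (fst t) (snd t)\<bar>
            < C1 * e ^ d / 8"
  from dref_hat_near_dref_n_of_net_accuracy[where n = n, OF e \<omega> S net this _ r(1) x] C1e
  have "\<bar>dref_hat e n m (\<lambda>i. X i \<omega>) (\<lambda>k. Y k \<omega>) x - dref_n dV pY e n (\<lambda>i. X i \<omega>) x\<bar>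
      \<le> C1 * e ^ d / 8 + 16 * R / e * r"
    by simp
  with r(2) dref_n C1e show "C1 * e ^ d / 2 \<le> dref_hat e n m (\<lambda>i. X i \<omega>) (\<lambda>k. Y k \<omega>) x
      \<and> dref_hat e n m (\<lambda>i. X i \<omega>) (\<lambda>k. Y k \<omega>) x \<le> 2 * C2 * e ^ d"
    unfolding abs_le_iff by (intro conjI) linarith+
qed

lemma prob_dref_bounds_of_net:
  assumes e: "0 < e" and C1: "0 < C1"
    and dref_bounds: "\<forall>x\<in>M. C1 * e ^ d \<le> dref dV pX pY e x \<and> dref dV pX pY e x \<le> C2 * e ^ d"
    and n: "0 < n" and m: "0 < m" and S: "finite S" "S \<subseteq> M"
    and net: "\<And>x. x \<in> M \<Longrightarrow> \<exists>s\<in>S. norm (x - s) \<le> r"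
    and r: "0 \<le> r" "16 * R / e * r \<le> C1 * e ^ d / 8"
  defines "\<delta> \<equiv> C1 * e ^ d / 8"
  shows "1 - card S * (2 * exp (-2 * real n * \<delta>\<^sup>2))
           \<le> prob {\<omega>\<in>space P. \<forall>x\<in>M. C1 * e ^ d / 2 \<le> dref_n dV pY e n (\<lambda>i. X i \<omega>) x
                                    \<and> dref_n dV pY e n (\<lambda>i. X i \<omega>) x \<le> 2 * C2 * e ^ d}"
    and "1 - card S * (2 * exp (-2 * real n * \<delta>\<^sup>2)) - card (S \<times> S) * (2 * exp (-2 * real m * \<delta>\<^sup>2))
           \<le> prob {\<omega>\<in>space P. \<forall>x\<in>M. C1 * e ^ d / 2 \<le> dref_hat e n m (\<lambda>i. X i \<omega>) (\<lambda>k. Y k \<omega>) x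
                                    \<and> dref_hat e n m (\<lambda>i. X i \<omega>) (\<lambda>k. Y k \<omega>) x \<le> 2 * C2 * e ^ d}"
proof -
  have \<delta>: "0 \<le> \<delta>" using C1 e by (simp add: \<delta>_def)
  define BX where "BX = {\<omega>\<in>space P. \<exists>s\<in>S. \<delta> \<le> \<bar>(\<Sum>i<n. Kref dV pY e s (X i \<omega>)) / n - dref dV pX pY e s\<bar>}"
  define BY where "BY = {\<omega>\<in>space P. \<exists>t\<in>S \<times> S. \<delta> \<le> \<bar>(\<Sum>k<m. Kern2 e (fst t) (snd t) (Y k \<omega>)) / m
                                                     - Kref dV pY e (fst t) (snd t)\<bar>}"
  note BX = prob_dref_n_net_deviation[OF e n S \<delta>, folded BX_def]
  note BY = prob_Kref_net_deviation[OF e m S \<delta>, folded BY_def]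
  note good = dref_bounds_of_net_accuracy[OF e C1 dref_bounds _ S(2) net r]
  have "space P - BX \<subseteq> {\<omega>\<in>space P. \<forall>x\<in>M. C1 * e ^ d / 2 \<le> dref_n dV pY e n (\<lambda>i. X i \<omega>) x
                                    \<and> dref_n dV pY e n (\<lambda>i. X i \<omega>) x \<le> 2 * C2 * e ^ d}"
    using good(1) by (auto simp: BX_def \<delta>_def not_le)
  then show "1 - card S * (2 * exp (-2 * real n * \<delta>\<^sup>2)) \<le> prob {\<omega>\<in>space P. \<forall>x\<in>M.
      C1 * e ^ d / 2 \<le> dref_n dV pY e n (\<lambda>i. X i \<omega>) x \<and> dref_n dV pY e n (\<lambda>i. X i \<omega>) x \<le> 2 * C2 * e ^ d}"
    by (intro prob_ge_of_compl_subset[OF sets_dref_n_bounds[OF e] BX(1) _ BX(2)])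
  have "space P - (BX \<union> BY) \<subseteq> {\<omega>\<in>space P. \<forall>x\<in>M.
      C1 * e ^ d / 2 \<le> dref_hat e n m (\<lambda>i. X i \<omega>) (\<lambda>k. Y k \<omega>) x
      \<and> dref_hat e n m (\<lambda>i. X i \<omega>) (\<lambda>k. Y k \<omega>) x \<le> 2 * C2 * e ^ d}"
    using good(2) by (auto simp: BX_def BY_def \<delta>_def not_le)
  moreover have "prob (BX \<union> BY)
      \<le> card S * (2 * exp (-2 * real n * \<delta>\<^sup>2)) + card (S \<times> S) * (2 * exp (-2 * real m * \<delta>\<^sup>2))"
    using measure_Un_le[OF BX(1) BY(1)] BX(2) BY(2) by linarith
  ultimately have "1 - (card S * (2 * exp (-2 * real n * \<delta>\<^sup>2)) + card (S \<times> S) * (2 * exp (-2 * real m * \<delta>\<^sup>2)))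
      \<le> prob {\<omega>\<in>space P. \<forall>x\<in>M. C1 * e ^ d / 2 \<le> dref_hat e n m (\<lambda>i. X i \<omega>) (\<lambda>k. Y k \<omega>) x
                                    \<and> dref_hat e n m (\<lambda>i. X i \<omega>) (\<lambda>k. Y k \<omega>) x \<le> 2 * C2 * e ^ d}"
    by (rule prob_ge_of_compl_subset[OF sets_dref_hat_bounds[OF e] sets.Un[OF BX(1) BY(1)]])
  then show "1 - card S * (2 * exp (-2 * real n * \<delta>\<^sup>2)) - card (S \<times> S) * (2 * exp (-2 * real m * \<delta>\<^sup>2))
      \<le> prob {\<omega>\<in>space P. \<forall>x\<in>M. C1 * e ^ d / 2 \<le> dref_hat e n m (\<lambda>i. X i \<omega>) (\<lambda>k. Y k \<omega>) x
                                    \<and> dref_hat e n m (\<lambda>i. X i \<omega>) (\<lambda>k. Y k \<omega>) x \<le> 2 * C2 * e ^ d}"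
    by simp
qed

lemma prob_dref_bounds:
  assumes e: "0 < e" "e < 1" "C1 * e < 128 * R" and C1: "0 < C1"
    and dref_bounds: "\<forall>x\<in>M. C1 * e ^ d \<le> dref dV pX pY e x \<and> dref dV pX pY e x \<le> C2 * e ^ d"
    and n: "0 < n" and m: "0 < m"
  defines "B \<equiv> (2 * R * DIM('a) + 3) * 128 * R / C1"
  shows "1 - net_tail_bound B DIM('a) d (C1\<^sup>2 / 32) e n
           \<le> prob {\<omega>\<in>space P. \<forall>x\<in>M. C1 * e ^ d / 2 \<le> dref_n dV pY e n (\<lambda>i. X i \<omega>) x
                                    \<and> dref_n dV pY e n (\<lambda>i. X i \<omega>) x \<le> 2 * C2 * e ^ d}"
      (is "_ \<le> prob ?good_n")
    and "1 - net_tail_bound B DIM('a) d (C1\<^sup>2 / 32) e n - net_tail_bound B DIM('a) d (C1\<^sup>2 / 32) e m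
           \<le> prob {\<omega>\<in>space P. \<forall>x\<in>M. C1 * e ^ d / 2 \<le> dref_hat e n m (\<lambda>i. X i \<omega>) (\<lambda>k. Y k \<omega>) x
                                    \<and> dref_hat e n m (\<lambda>i. X i \<omega>) (\<lambda>k. Y k \<omega>) x \<le> 2 * C2 * e ^ d}"
      (is "_ \<le> prob ?good_hat")
proof -
  define A where "A = 2 * R * DIM('a) + 3"
  \<comment> \<open>the radius for which the Lipschitz error \<open>16 R r / e\<close> equals the deviation \<open>C1 e^d / 8\<close>\<close>
  define r where "r = C1 * e ^ (d + 1) / (128 * R)"
  have r: "0 < r" "r \<le> 1"
  proof -
    show "0 < r" using C1 e R_pos by (simp add: r_def)
    have "e ^ (d + 1) \<le> e" using e by (simp add: power_le_one mult_left_le_one_le)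
    then have "r \<le> C1 * e / (128 * R)"
      unfolding r_def using C1 R_pos by (intro divide_right_mono mult_left_mono) auto
    also have "\<dots> \<le> 1" using e(3) R_pos by simp
    finally show "r \<le> 1" .
  qed
  have rR: "16 * R / e * r \<le> C1 * e ^ d / 8"
    unfolding r_def using R_pos e by (simp add: field_simps)
  from finite_net[where M = M, OF less_imp_le[OF R_pos] norm_le_R r] obtain S where
    S: "S \<subseteq> M" "finite S" "card S \<le> (A / r) ^ DIM('a)" "\<And>x. x \<in> M \<Longrightarrow> \<exists>s\<in>S. norm (x - s) \<le> r"
    unfolding A_def by auto
  have "0 \<le> 2 * R * DIM('a)" using R_pos by simp
  then have "1 \<le> A / r" using r unfolding A_def by simp
  moreover have "A / r = B / e ^ (d + 1)"
    unfolding r_def A_def B_def using C1 R_pos e by (simp add: field_simps)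
  ultimately have "card S \<le> (B / e ^ (d + 1)) ^ DIM('a)" "1 \<le> B / e ^ (d + 1)"
    using S(3) by simp_all
  note card = card_product_le_power[OF this]
  note bounds = prob_dref_bounds_of_net[where r = r, OF e(1) C1 dref_bounds n m S(2,1) S(4) less_imp_le[OF r(1)] rR]
  show "1 - net_tail_bound B DIM('a) d (C1\<^sup>2 / 32) e n \<le> prob ?good_n"
    using bounds(1) hoeffding_tail_le_net_tail_bound[OF card(1), where C = C1 and N = n] by linarith
  show "1 - net_tail_bound B DIM('a) d (C1\<^sup>2 / 32) e n - net_tail_bound B DIM('a) d (C1\<^sup>2 / 32) e m
      \<le> prob ?good_hat"
    using bounds(2) hoeffding_tail_le_net_tail_bound[OF card(1), where C = C1 and N = n]
      hoeffding_tail_le_net_tail_bound[OF card(2), where C = C1 and N = m] by linarith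
qed

lemma eventually_prob_dref_bounds:
  fixes \<epsilon> :: "nat \<Rightarrow> real" and m :: "nat \<Rightarrow> nat" and \<beta> C1 C2 \<epsilon>0 :: real and d :: nat
  assumes C1: "0 < C1" and \<epsilon>0: "0 < \<epsilon>0"
    and dref_bounds: "\<forall>e. 0 < e \<and> e < \<epsilon>0 \<longrightarrow>
                        (\<forall>x\<in>M. C1 * e ^ d \<le> dref dV pX pY e x \<and> dref dV pX pY e x \<le> C2 * e ^ d)"
    and \<epsilon>: "\<And>n. 0 < \<epsilon> n" "\<epsilon> \<longlonglongrightarrow> 0"
    and m_def: "\<And>n. m n = nat \<lfloor>real n powr \<beta>\<rfloor>" and \<beta>: "0 < \<beta>" "\<beta> < 1"
    and rate: "(\<lambda>n. (sqrt (- ln (\<epsilon> n)) + sqrt (ln (m n))) / (sqrt (m n) * \<epsilon> n ^ d)) \<longlonglongrightarrow> 0"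
  shows "\<forall>\<^sub>F n in sequentially.
           1 - 2 / (real (m n))\<^sup>2 \<le> prob {\<omega>\<in>space P. \<forall>x\<in>M.
               C1 * \<epsilon> n ^ d / 2 \<le> dref_hat (\<epsilon> n) n (m n) (\<lambda>i. X i \<omega>) (\<lambda>k. Y k \<omega>) x
             \<and> dref_hat (\<epsilon> n) n (m n) (\<lambda>i. X i \<omega>) (\<lambda>k. Y k \<omega>) x \<le> 2 * C2 * \<epsilon> n ^ d}
         \<and> 1 - 2 / (real n)\<^sup>2 \<le> prob {\<omega>\<in>space P. \<forall>x\<in>M.
               C1 * \<epsilon> n ^ d / 2 \<le> dref_n dV pY (\<epsilon> n) n (\<lambda>i. X i \<omega>) x
             \<and> dref_n dV pY (\<epsilon> n) n (\<lambda>i. X i \<omega>) x \<le> 2 * C2 * \<epsilon> n ^ d}"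
proof -
  define B where "B = (2 * R * DIM('a) + 3) * 128 * R / C1"
  have B: "0 < B"
    unfolding B_def using R_pos C1 by (intro divide_pos_pos mult_pos_pos add_nonneg_pos) auto
  have "\<forall>\<^sub>F n in sequentially. \<epsilon> n < min \<epsilon>0 (128 * R / C1)"
    using \<epsilon>0 R_pos C1 by (intro order_tendstoD(2)[OF \<epsilon>(2)]) simp
  moreover have "\<forall>\<^sub>F n in sequentially. 0 < m n \<and> m n \<le> n \<and> \<epsilon> n < 1
      \<and> net_tail_bound B DIM('a) d (C1\<^sup>2 / 32) (\<epsilon> n) (m n) \<le> 1 / (real (m n))\<^sup>2
      \<and> net_tail_bound B DIM('a) d (C1\<^sup>2 / 32) (\<epsilon> n) n \<le> 1 / (real n)\<^sup>2"
    using B C1 by (intro eventually_net_tail_bound_le[OF \<epsilon> m_def \<beta> rate]) simp_all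
  ultimately show ?thesis
  proof eventually_elim
    case (elim n)
    have e: "\<epsilon> n < 1" "C1 * \<epsilon> n < 128 * R" and mn: "0 < n" "0 < m n"
      using elim C1 by (auto simp: field_simps)
    have "\<forall>x\<in>M. C1 * \<epsilon> n ^ d \<le> dref dV pX pY (\<epsilon> n) x \<and> dref dV pX pY (\<epsilon> n) x \<le> C2 * \<epsilon> n ^ d"
      using dref_bounds \<epsilon>(1) elim by simp
    note bounds = prob_dref_bounds[OF \<epsilon>(1) e C1 this mn, folded B_def]
    have "1 / (real n)\<^sup>2 \<le> 1 / (real (m n))\<^sup>2" "1 / (real n)\<^sup>2 \<le> 2 / (real n)\<^sup>2"
      using elim by (auto intro: divide_left_mono divide_right_mono power_mono)
    then show ?case using bounds elim by (intro conjI; linarith)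
  qed
qed

end

theorem mainTheorem10:
  fixes M :: "'a::euclidean_space set"
    and T :: "'b::euclidean_space itself"
    and P :: "'w measure"
    and X Y :: "nat \<Rightarrow> 'w \<Rightarrow> 'a"
    and pX pY :: "'a \<Rightarrow> real"
    and \<beta> C1 C2 :: real
    and m :: "nat \<Rightarrow> nat"
    and \<epsilon> :: "nat \<Rightarrow> real"
  defines "d \<equiv> DIM('b)"
  defines "dV \<equiv> vol_measure DIM('b) M"
  assumes manifold: "compact_embedded_submanifold T M"
    and pX_C4: "Ck_on_manifold T 4 M pX" and pY_C4: "Ck_on_manifold T 4 M pY"
    and pX_lb: "\<exists>c>0. \<forall>x\<in>M. c \<le> pX x" and pY_lb: "\<exists>c>0. \<forall>x\<in>M. c \<le> pY x"
    and prob: "prob_space P"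
    and X_distr: "\<And>i. distributed P dV (X i) (\<lambda>x. ennreal (pX x))"
    and Y_distr: "\<And>k. distributed P dV (Y k) (\<lambda>y. ennreal (pY y))"
    and indep: "prob_space.indep_vars P (\<lambda>_. dV)
                  (\<lambda>j. case j of Inl i \<Rightarrow> X i | Inr k \<Rightarrow> Y k) UNIV"
    and C_pos: "C1 > 0" "C2 > 0"
    and C_bounds: "\<exists>\<epsilon>0>0. \<forall>e. 0 < e \<and> e < \<epsilon>0 \<longrightarrow>
                     (\<forall>x\<in>M. C1 * e ^ d \<le> dref dV pX pY e x \<and> dref dV pX pY e x \<le> C2 * e ^ d)"
    and beta: "0 < \<beta>" "\<beta> < 1"
    and m_def: "\<And>n. m n = nat \<lfloor>real n powr \<beta>\<rfloor>"
    and eps_pos: "\<And>n. \<epsilon> n > 0"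
    and eps_lim: "\<epsilon> \<longlonglongrightarrow> 0"
    and eps_rate: "(\<lambda>n. (sqrt (- ln (\<epsilon> n)) + sqrt (ln (real (m n))))
                        / (sqrt (real (m n)) * \<epsilon> n ^ d)) \<longlonglongrightarrow> 0"
  shows "\<exists>c N. \<forall>n\<ge>N.
           prob_space.prob P {\<omega> \<in> space P. \<forall>x\<in>M.
               C1 * \<epsilon> n ^ d / 2 \<le> dref_hat (\<epsilon> n) n (m n) (\<lambda>i. X i \<omega>) (\<lambda>k. Y k \<omega>) x \<and>
               dref_hat (\<epsilon> n) n (m n) (\<lambda>i. X i \<omega>) (\<lambda>k. Y k \<omega>) x \<le> 2 * C2 * \<epsilon> n ^ d}
             \<ge> 1 - c / (real (m n))\<^sup>2
         \<and> prob_space.prob P {\<omega> \<in> space P. \<forall>x\<in>M.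
               C1 * \<epsilon> n ^ d / 2 \<le> dref_n dV pY (\<epsilon> n) n (\<lambda>i. X i \<omega>) x \<and>
               dref_n dV pY (\<epsilon> n) n (\<lambda>i. X i \<omega>) x \<le> 2 * C2 * \<epsilon> n ^ d}
             \<ge> 1 - c / (real n)\<^sup>2"
proof -
  interpret prob_space P by (rule prob)
  obtain R where R: "0 < R" "\<And>x. x \<in> M \<Longrightarrow> norm x \<le> R"
    using manifold unfolding compact_embedded_submanifold_def by (metis compact_imp_bounded bounded_pos)
  interpret ref_kernel_samples P dV M X Y pX pY R
    using R pX_lb pY_lb X_distr Y_distr indep_vars_case_sum[OF indep]
    by unfold_locales (force simp: dV_def space_vol_measure sets_vol_measure)+
  obtain \<epsilon>0 where "0 < \<epsilon>0" "\<forall>e. 0 < e \<and> e < \<epsilon>0 \<longrightarrow>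
      (\<forall>x\<in>M. C1 * e ^ d \<le> dref dV pX pY e x \<and> dref dV pX pY e x \<le> C2 * e ^ d)"
    using C_bounds by blast
  from eventually_prob_dref_bounds[OF C_pos(1) this eps_pos eps_lim m_def beta eps_rate]
  show ?thesis
    unfolding eventually_sequentially by blast
qed

end
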